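(* Let $n,d\in\mathbb{N}_0$, let $\mathcal{P}(n,2d)$ be the set of homogeneous polynomials of degree $2d$ in $\mathbb{R}[x_0,\dots,x_n]$ that are non-negative on $\mathbb{R}^{n+1}$, let $t=(t_\alpha)_{\alpha\in\mathbb{N}_0^{n+1},|\alpha|=2d}$ be real numbers, and let $T$ be the linear map on the space of homogeneous polynomials of degree $2d$ in $x_0,\dots,x_n$ with $Tx^\alpha=t_\alpha x^\alpha$ for all $|\alpha|=2d$. Let $L_t$ be the linear functional on that space with $L_t(x^\alpha)=t_\alpha$. Then $T(\mathcal{P}(n,2d))\subseteq\mathcal{P}(n,2d)$ if and only if $L_t(p)\ge0$ for all $p\in\mathcal{P}(n,2d)$. *)

theory Defs
  imports Complex_Main
begin

text \<open>Homogeneous polynomials of degree k in the variables x_0,...,x_n with real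
coefficients are represented by their coefficient functions on exponent vectors
alpha :: nat => nat (alpha i = exponent of x_i), supported on exponents with
alpha i = 0 for i > n and |alpha| = k.\<close>

definition mexps :: "nat \<Rightarrow> nat \<Rightarrow> (nat \<Rightarrow> nat) set" where
  "mexps n k = {\<alpha>. (\<forall>i>n. \<alpha> i = 0) \<and> (\<Sum>i\<le>n. \<alpha> i) = k}"

definition hom_polys :: "nat \<Rightarrow> nat \<Rightarrow> ((nat \<Rightarrow> nat) \<Rightarrow> real) set" where
  "hom_polys n k = {p. \<forall>\<alpha>. \<alpha> \<notin> mexps n k \<longrightarrow> p \<alpha> = 0}"

definition peval :: "nat \<Rightarrow> nat \<Rightarrow> ((nat \<Rightarrow> nat) \<Rightarrow> real) \<Rightarrow> (nat \<Rightarrow> real) \<Rightarrow> real" where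
  "peval n k p x = (\<Sum>\<alpha>\<in>mexps n k. p \<alpha> * (\<Prod>i\<le>n. x i ^ \<alpha> i))"

definition Pnn :: "nat \<Rightarrow> nat \<Rightarrow> ((nat \<Rightarrow> nat) \<Rightarrow> real) set" where
  "Pnn n k = {p \<in> hom_polys n k. \<forall>x. peval n k p x \<ge> 0}"

definition Tdiag :: "((nat \<Rightarrow> nat) \<Rightarrow> real) \<Rightarrow> ((nat \<Rightarrow> nat) \<Rightarrow> real) \<Rightarrow> ((nat \<Rightarrow> nat) \<Rightarrow> real)" where
  "Tdiag t p = (\<lambda>\<alpha>. t \<alpha> * p \<alpha>)"

definition Lfun :: "nat \<Rightarrow> nat \<Rightarrow> ((nat \<Rightarrow> nat) \<Rightarrow> real) \<Rightarrow> ((nat \<Rightarrow> nat) \<Rightarrow> real) \<Rightarrow> real" where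
  "Lfun n k t p = (\<Sum>\<alpha>\<in>mexps n k. t \<alpha> * p \<alpha>)"

end

theory Submission
  imports Defs
begin

text \<open>Evaluating at the all-ones point turns \<open>T p\<close> into \<open>L\<^sub>t(p)\<close>, which gives one
direction. Conversely, \<open>(T p)(x) = L\<^sub>t(p\<^sub>x)\<close> for the rescaled polynomial
\<open>p\<^sub>x(y) = p(x\<^sub>0 y\<^sub>0, \<dots>, x\<^sub>n y\<^sub>n)\<close>, and \<open>p\<^sub>x\<close> is non-negative whenever \<open>p\<close> is.
No evenness of the degree is needed.\<close>

definition pscale :: "nat \<Rightarrow> (nat \<Rightarrow> real) \<Rightarrow> ((nat \<Rightarrow> nat) \<Rightarrow> real) \<Rightarrow> ((nat \<Rightarrow> nat) \<Rightarrow> real)"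
  where "pscale n x p = (\<lambda>\<alpha>. p \<alpha> * (\<Prod>i\<le>n. x i ^ \<alpha> i))"

lemma Tdiag_hom_polys: "p \<in> hom_polys n k \<Longrightarrow> Tdiag t p \<in> hom_polys n k"
  unfolding hom_polys_def Tdiag_def by auto

lemma pscale_hom_polys: "p \<in> hom_polys n k \<Longrightarrow> pscale n x p \<in> hom_polys n k"
  unfolding hom_polys_def pscale_def by auto

lemma peval_pscale: "peval n k (pscale n x p) y = peval n k p (\<lambda>i. x i * y i)"
  unfolding peval_def pscale_def
  by (rule sum.cong) (simp_all add: power_mult_distrib prod.distrib mult.assoc)

lemma pscale_Pnn: "p \<in> Pnn n k \<Longrightarrow> pscale n x p \<in> Pnn n k"
  unfolding Pnn_def by (simp add: pscale_hom_polys peval_pscale)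

lemma peval_Tdiag_ones: "peval n k (Tdiag t p) (\<lambda>_. 1) = Lfun n k t p"
  unfolding peval_def Lfun_def Tdiag_def by simp

lemma Lfun_pscale: "Lfun n k t (pscale n x p) = peval n k (Tdiag t p) x"
  unfolding Lfun_def peval_def Tdiag_def pscale_def by (simp add: mult.assoc)

lemma Tdiag_preserves_Pnn_iff_Lfun_nonneg:
  "(\<forall>p\<in>Pnn n k. Tdiag t p \<in> Pnn n k) \<longleftrightarrow> (\<forall>p\<in>Pnn n k. Lfun n k t p \<ge> 0)"
proof
  assume "\<forall>p\<in>Pnn n k. Tdiag t p \<in> Pnn n k"
  then show "\<forall>p\<in>Pnn n k. Lfun n k t p \<ge> 0"
    unfolding Pnn_def by (simp flip: peval_Tdiag_ones)
next
  assume L_nonneg: "\<forall>p\<in>Pnn n k. Lfun n k t p \<ge> 0"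
  show "\<forall>p\<in>Pnn n k. Tdiag t p \<in> Pnn n k"
  proof
    fix p assume p: "p \<in> Pnn n k"
    have "peval n k (Tdiag t p) x \<ge> 0" for x
      using L_nonneg pscale_Pnn[OF p, of x] by (metis Lfun_pscale)
    with p show "Tdiag t p \<in> Pnn n k"
      unfolding Pnn_def by (simp add: Tdiag_hom_polys)
  qed
qed

theorem mainTheorem7:
  fixes n d :: nat and t :: "(nat \<Rightarrow> nat) \<Rightarrow> real"
  shows "(\<forall>p\<in>Pnn n (2*d). Tdiag t p \<in> Pnn n (2*d)) \<longleftrightarrow>
         (\<forall>p\<in>Pnn n (2*d). Lfun n (2*d) t p \<ge> 0)"
  by (rule Tdiag_preserves_Pnn_iff_Lfun_nonneg)

end
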